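(* In the timely decision problem described in the context, define $\alpha_0=\beta_0=0\in\mathbb{R}^{\Theta}$ and, for $t\ge1$ and $\theta\in\Theta$, with $\bar p_t\doteq\sum_{\theta'\in\Theta}p_{\theta',\lambda_{t-1}}\mu_{t-1}(\theta')$, $$\alpha_t(\theta)=\alpha_{t-1}(\theta)-\mu_{t-1}(\theta)\,\nu_{t-1}\nu_t\,\frac{p_{\theta,\lambda_{t-1}}-\bar p_t}{1-\bar p_t},\qquad \beta_t(\theta)=\beta_{t-1}(\theta)+\mu_{t-1}(\theta)\,\nu_{t-1}(1-\nu_t)\,\frac{p_{\theta,\lambda_{t-1}}-\bar p_t}{\bar p_t}.$$ Then the posterior decomposes as $\mu_t=\tilde\mu_t+\alpha_t+\beta_t$, where $\tilde\mu_t\doteq\mu_t-\alpha_t-\beta_t$ is a martingale: $\mathbb{E}[\tilde\mu_t-\tilde\mu_{t-1}\mid \lambda_{t-1},\mu_{t-1},\nu_{t-1}]=0$ for all $t\ge1$. Here $\tilde\mu_t$ captures the information from the acquired outcomes, $\alpha_t$ (a function of $\mu_{t-1},\lambda_{t-1},\nu_{t-1},\nu_t$ and the past) compensates for the bias due to survival, and $\beta_t$ compensates for the bias due to stoppage.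
   Context: $\Theta,\Lambda,\Omega$ are finite nonempty sets; $\Delta(\Theta)$ is the simplex over $\Theta$. For $\theta\in\Theta,\lambda\in\Lambda$, $q_{\theta,\lambda}$ is a known distribution on $\Omega$ and $p_{\theta,\lambda}\in(0,1)$. A latent $\theta\sim\mu_0$ (known prior). Survival process $\nu_t\in\{0,1\}$, $\nu_0=1$. At each time $t$ with $\nu_t=1$ an acquisition $\lambda_t\in\Lambda$ is chosen as a (possibly randomized) function of the observed history; given $\theta,\nu_t=1,\lambda_t$, $\nu_{t+1}=0$ with probability $p_{\theta,\lambda_t}$, otherwise $\nu_{t+1}=1$ and an outcome $\omega_{t+1}\sim q_{\theta,\lambda_t}$ is observed, conditionally independent of the past given $\theta,\lambda_t$; once $\nu_t=0$ nothing more happens and $\nu$ stays $0$. $\mu_t\in\Delta(\Theta)$ is the posterior of $\theta$ given the observed history ($\lambda_{0:t-1}$, $\nu_{1:t}$, observed outcomes); it satisfies $\mu_t=\mu_{t-1}$ if $\nu_{t-1}=0$, $\mu_t(\theta)\propto p_{\theta,\lambda_{t-1}}\mu_{t-1}(\theta)$ if $\nu_{t-1}=1,\nu_t=0$, and $\mu_t(\theta)\propto(1-p_{\theta,\lambda_{t-1}})q_{\theta,\lambda_{t-1}}(\omega_t)\mu_{t-1}(\theta)$ if $\nu_t=1$. *)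

theory Defs
  imports "HOL-Probability.Probability"
begin

text \<open>Outcome recorded at one time step of the observed history:
  Dead = the process was already stopped (nothing happens),
  Died = the process was alive and stopped now (nu becomes 0),
  Obs w = the process survived and outcome w was observed.\<close>
datatype 'o outcome = Dead | Died | Obs 'o

type_synonym ('l, 'o) hist = "('l \<times> 'o outcome) list"

fun nu :: "nat \<Rightarrow> ('l, 'o) hist \<Rightarrow> real" where
  "nu 0 h = 1"
| "nu (Suc t) h = (if nu t h = 1 \<and> (\<exists>w. snd (h ! t) = Obs w) then 1 else 0)"

definition lam :: "nat \<Rightarrow> ('l, 'o) hist \<Rightarrow> 'l" where
  "lam t h = fst (h ! t)"

definition normalize :: "('th::finite \<Rightarrow> real) \<Rightarrow> 'th \<Rightarrow> real" where
  "normalize f = (\<lambda>\<theta>. f \<theta> / (\<Sum>\<theta>'\<in>UNIV. f \<theta>'))"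

fun mu :: "'th::finite pmf \<Rightarrow> ('th \<Rightarrow> 'l \<Rightarrow> real) \<Rightarrow> ('th \<Rightarrow> 'l \<Rightarrow> 'o pmf)
            \<Rightarrow> nat \<Rightarrow> ('l, 'o) hist \<Rightarrow> 'th \<Rightarrow> real" where
  "mu mu0 p q 0 h = pmf mu0"
| "mu mu0 p q (Suc t) h =
     (if nu t h = 0 then mu mu0 p q t h
      else if nu (Suc t) h = 0 then
        normalize (\<lambda>\<theta>. p \<theta> (lam t h) * mu mu0 p q t h \<theta>)
      else (case snd (h ! t) of
              Obs w \<Rightarrow> normalize (\<lambda>\<theta>. (1 - p \<theta> (lam t h)) * pmf (q \<theta> (lam t h)) w
                                      * mu mu0 p q t h \<theta>)
            | _ \<Rightarrow> mu mu0 p q t h))"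

definition pbar :: "'th::finite pmf \<Rightarrow> ('th \<Rightarrow> 'l \<Rightarrow> real) \<Rightarrow> ('th \<Rightarrow> 'l \<Rightarrow> 'o pmf)
            \<Rightarrow> nat \<Rightarrow> ('l, 'o) hist \<Rightarrow> real" where
  "pbar mu0 p q t h = (\<Sum>\<theta>'\<in>UNIV. p \<theta>' (lam t h) * mu mu0 p q t h \<theta>')"

fun alpha :: "'th::finite pmf \<Rightarrow> ('th \<Rightarrow> 'l \<Rightarrow> real) \<Rightarrow> ('th \<Rightarrow> 'l \<Rightarrow> 'o pmf)
            \<Rightarrow> nat \<Rightarrow> ('l, 'o) hist \<Rightarrow> 'th \<Rightarrow> real" where
  "alpha mu0 p q 0 h = (\<lambda>_. 0)"
| "alpha mu0 p q (Suc t) h = (\<lambda>\<theta>. alpha mu0 p q t h \<theta>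
      - mu mu0 p q t h \<theta> * nu t h * nu (Suc t) h
        * (p \<theta> (lam t h) - pbar mu0 p q t h) / (1 - pbar mu0 p q t h))"

fun beta :: "'th::finite pmf \<Rightarrow> ('th \<Rightarrow> 'l \<Rightarrow> real) \<Rightarrow> ('th \<Rightarrow> 'l \<Rightarrow> 'o pmf)
            \<Rightarrow> nat \<Rightarrow> ('l, 'o) hist \<Rightarrow> 'th \<Rightarrow> real" where
  "beta mu0 p q 0 h = (\<lambda>_. 0)"
| "beta mu0 p q (Suc t) h = (\<lambda>\<theta>. beta mu0 p q t h \<theta>
      + mu mu0 p q t h \<theta> * nu t h * (1 - nu (Suc t) h)
        * (p \<theta> (lam t h) - pbar mu0 p q t h) / pbar mu0 p q t h)"

definition mutilde :: "'th::finite pmf \<Rightarrow> ('th \<Rightarrow> 'l \<Rightarrow> real) \<Rightarrow> ('th \<Rightarrow> 'l \<Rightarrow> 'o pmf)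
            \<Rightarrow> nat \<Rightarrow> ('l, 'o) hist \<Rightarrow> 'th \<Rightarrow> real" where
  "mutilde mu0 p q t h = (\<lambda>\<theta>. mu mu0 p q t h \<theta> - alpha mu0 p q t h \<theta> - beta mu0 p q t h \<theta>)"

definition step :: "('th \<Rightarrow> 'l \<Rightarrow> real) \<Rightarrow> ('th \<Rightarrow> 'l \<Rightarrow> 'o pmf) \<Rightarrow> real \<Rightarrow> 'th \<Rightarrow> 'l
                    \<Rightarrow> 'o outcome pmf" where
  "step p q v \<theta> l = (if v = 1 then
       bernoulli_pmf (p \<theta> l) \<bind> (\<lambda>d. if d then return_pmf Died else map_pmf Obs (q \<theta> l))
     else return_pmf Dead)"

text \<open>Joint law of (theta, observed history of length t) under prior mu0 and
  (randomized, history-dependent) acquisition policy pol.\<close>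
fun joint :: "'th::finite pmf \<Rightarrow> ('th \<Rightarrow> 'l \<Rightarrow> real) \<Rightarrow> ('th \<Rightarrow> 'l \<Rightarrow> 'o pmf)
            \<Rightarrow> (('l, 'o) hist \<Rightarrow> 'l pmf) \<Rightarrow> nat \<Rightarrow> ('th \<times> ('l, 'o) hist) pmf" where
  "joint mu0 p q pol 0 = map_pmf (\<lambda>\<theta>. (\<theta>, [])) mu0"
| "joint mu0 p q pol (Suc t) = joint mu0 p q pol t \<bind> (\<lambda>(\<theta>, h).
      pol h \<bind> (\<lambda>l. map_pmf (\<lambda>r. (\<theta>, h @ [(l, r)])) (step p q (nu t h) \<theta> l)))"

end

theory Submission
  imports Defs
begin

text \<open>Given the observed history h up to time t, the parameter is distributed according to the
  posterior mu t h, so given h and the acquisition l the next outcome follows the predictive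
  mixture of the one-step laws. Under this mixture Bayes' rule makes the posterior a martingale,
  while the survival compensator alpha drifts by -mu t h \<theta> * (p \<theta> l - pbar), pbar being the
  posterior stopping probability, and the stoppage compensator beta by exactly the opposite
  amount. Hence the increment of mu - alpha - beta has conditional mean zero given the history
  and the acquisition, and a fortiori on every event they determine.\<close>

instance outcome :: (finite) finite
proof
  have "(UNIV :: 'a outcome set) = {Dead, Died} \<union> range Obs"
    by (auto intro: outcome.exhaust)
  moreover have "finite ({Dead, Died} \<union> range (Obs :: 'a \<Rightarrow> 'a outcome))"
    by simp
  ultimately show "finite (UNIV :: 'a outcome set)"
    by metis
qed

lemma sum_UNIV_outcome:
  fixes f :: "'o::finite outcome \<Rightarrow> 'a::comm_monoid_add"
  shows "(\<Sum>r\<in>UNIV. f r) = f Dead + f Died + (\<Sum>w\<in>UNIV. f (Obs w))"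
proof -
  have UNIV_outcome: "(UNIV :: 'o outcome set) = insert Dead (insert Died (range Obs))"
    by (auto intro: outcome.exhaust)
  show ?thesis
    unfolding UNIV_outcome by (simp add: sum.reindex inj_def add.assoc image_iff)
qed

lemma expectation_point_pmf:
  "measure_pmf.expectation M (\<lambda>y. if y = x then c else 0) = c * pmf M x"
  by (subst integral_measure_pmf_real[of "{x}"]) (auto split: if_splits)

lemma expectation_finite_UNIV:
  fixes M :: "'a::finite pmf" and f :: "'a \<Rightarrow> real"
  shows "measure_pmf.expectation M f = (\<Sum>x\<in>UNIV. pmf M x * f x)"
  by (subst integral_measure_pmf_real[of UNIV]) (auto simp: mult.commute)

lemma weighted_sum_in_unit_interval:
  fixes m f :: "'a::finite \<Rightarrow> real"
  assumes "\<And>x. 0 \<le> m x" "(\<Sum>x\<in>UNIV. m x) = 1" "\<And>x. 0 < f x \<and> f x < 1"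
  shows "0 < (\<Sum>x\<in>UNIV. f x * m x)" "(\<Sum>x\<in>UNIV. f x * m x) < 1"
proof -
  obtain x0 where "0 < m x0"
    using assms(1,2) by (metis less_eq_real_def sum_nonneg_eq_0_iff finite zero_neq_one)
  with assms have pos: "0 < (\<Sum>x\<in>UNIV. g x * m x)" if "\<And>x. 0 < g x" for g
    using that by (intro sum_pos2[of UNIV x0]) (auto simp: less_imp_le)
  show "0 < (\<Sum>x\<in>UNIV. f x * m x)"
    using assms(3) by (intro pos) simp
  have "0 < (\<Sum>x\<in>UNIV. (1 - f x) * m x)"
    using assms(3) by (intro pos) simp
  then show "(\<Sum>x\<in>UNIV. f x * m x) < 1"
    using assms(2) by (simp add: algebra_simps sum_subtractf)
qed

lemma sum_mult_normalize:
  fixes f :: "'a::finite \<Rightarrow> real"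
  assumes "\<And>x. 0 \<le> f x"
  shows "(\<Sum>y\<in>UNIV. f y) * normalize f x = f x"
proof (cases "(\<Sum>y\<in>UNIV. f y) = 0")
  case True
  with assms show ?thesis
    by (simp add: sum_nonneg_eq_0_iff)
qed (simp add: normalize_def)

lemma normalize_nonneg: "(\<And>x. 0 \<le> f x) \<Longrightarrow> 0 \<le> normalize f x"
  by (simp add: normalize_def sum_nonneg)

lemma sum_normalize: "(\<Sum>x\<in>UNIV. normalize f x) = 1 \<or> normalize f = (\<lambda>_. 0)"
  by (cases "(\<Sum>x\<in>UNIV. f x) = 0") (auto simp: normalize_def sum_divide_distrib[symmetric])

lemma nu_eq_0_or_1: "nu t h = 0 \<or> nu t h = 1"
  by (cases t) auto

lemma nu_append: "t \<le> length h \<Longrightarrow> nu t (h @ xs) = nu t h"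
  by (induction t) (auto simp: nth_append)

lemma lam_append: "t < length h \<Longrightarrow> lam t (h @ xs) = lam t h"
  by (simp add: lam_def nth_append)

lemma mu_append: "t \<le> length h \<Longrightarrow> mu mu0 p q t (h @ xs) = mu mu0 p q t h"
  by (induction t) (auto simp: nth_append nu_append lam_append split: outcome.split)

lemma pbar_append: "t < length h \<Longrightarrow> pbar mu0 p q t (h @ xs) = pbar mu0 p q t h"
  by (simp add: pbar_def lam_append mu_append)

lemma alpha_append: "t \<le> length h \<Longrightarrow> alpha mu0 p q t (h @ xs) = alpha mu0 p q t h"
  by (induction t) (simp_all add: nu_append lam_append mu_append pbar_append del: nu.simps mu.simps)

lemma beta_append: "t \<le> length h \<Longrightarrow> beta mu0 p q t (h @ xs) = beta mu0 p q t h"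
  by (induction t) (simp_all add: nu_append lam_append mu_append pbar_append del: nu.simps mu.simps)

lemma mutilde_append: "t \<le> length h \<Longrightarrow> mutilde mu0 p q t (h @ xs) = mutilde mu0 p q t h"
  by (simp add: mutilde_def mu_append alpha_append beta_append)

lemma mu_take: "t \<le> length h \<Longrightarrow> mu mu0 p q t (take t h) = mu mu0 p q t h"
  using mu_append[of t "take t h" mu0 p q "drop t h"] by simp

lemma nu_take: "t \<le> length h \<Longrightarrow> nu t (take t h) = nu t h"
  using nu_append[of t "take t h" "drop t h"] by simp

lemma lam_snoc: "length h = t \<Longrightarrow> lam t (h @ [(l, r)]) = l"
  by (simp add: lam_def nth_append)

lemma nu_Suc_snoc:
  "length h = t \<Longrightarrow> nu (Suc t) (h @ [(l, r)]) = (if \<exists>w. r = Obs w then nu t h else 0)"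
  using nu_eq_0_or_1[of t h] by (auto simp: nu_append)

lemma pbar_snoc:
  "length h = t \<Longrightarrow> pbar mu0 p q t (h @ [(l, r)]) = (\<Sum>\<theta>'\<in>UNIV. p \<theta>' l * mu mu0 p q t h \<theta>')"
  by (simp add: pbar_def lam_snoc mu_append)

lemma mu_Suc_snoc:
  assumes "length h = t"
  shows "mu mu0 p q (Suc t) (h @ [(l, r)]) =
    (if nu t h = 0 then mu mu0 p q t h
     else case r of
       Obs w \<Rightarrow> normalize (\<lambda>\<theta>. (1 - p \<theta> l) * pmf (q \<theta> l) w * mu mu0 p q t h \<theta>)
     | _ \<Rightarrow> normalize (\<lambda>\<theta>. p \<theta> l * mu mu0 p q t h \<theta>))"
  using assms nu_eq_0_or_1[of t h]
  by (auto simp: nth_append lam_snoc mu_append nu_append split: outcome.split)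

text \<open>On histories of probability zero the Bayes update normalizes the zero vector, and
  x / 0 = 0 makes the posterior vanish identically.\<close>
lemma sum_mu: "(\<Sum>\<theta>\<in>UNIV. mu mu0 p q t h \<theta>) = 1 \<or> mu mu0 p q t h = (\<lambda>_. 0)"
proof (induction t)
  case 0
  show ?case
    by (simp add: sum_pmf_eq_1)
next
  case (Suc t)
  then show ?case
    using sum_normalize by (auto split: outcome.split)
qed

lemma set_pmf_joint: "set_pmf (joint mu0 p q pol t) \<subseteq> UNIV \<times> {h. length h = t}"
  by (induction t) (auto simp: set_bind_pmf subset_iff)

lemma pmf_joint_eq_0: "length h \<noteq> t \<Longrightarrow> pmf (joint mu0 p q pol t) (\<theta>, h) = 0"
  using set_pmf_joint[of mu0 p q pol t] by (auto simp: pmf_eq_0_set_pmf)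

lemma finite_histories: "finite {h :: ('l::finite, 'o::finite) hist. length h = t}"
  using finite_lists_length_eq[of "UNIV :: ('l \<times> 'o outcome) set" t] by simp

lemma expectation_joint_Suc:
  fixes mu0 :: "'th::finite pmf" and q :: "'th \<Rightarrow> 'l::finite \<Rightarrow> 'o::finite pmf"
  shows "measure_pmf.expectation (joint mu0 p q pol (Suc t)) G
    = measure_pmf.expectation (joint mu0 p q pol t) (\<lambda>(\<theta>, h). \<Sum>l\<in>UNIV. pmf (pol h) l *
        (\<Sum>r\<in>UNIV. pmf (step p q (nu t h) \<theta> l) r * G (\<theta>, h @ [(l, r)])))"
    (is "_ = measure_pmf.expectation _ ?K")
proof -
  let ?A = "(UNIV :: 'th set) \<times> {h :: ('l, 'o) hist. length h = t}"
  have "finite ?A"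
    by (simp add: finite_histories)
  have "measure_pmf.expectation (joint mu0 p q pol (Suc t)) G
          = (\<Sum>a\<in>?A. pmf (joint mu0 p q pol t) a * ?K a)"
    using \<open>finite ?A\<close> set_pmf_joint[of mu0 p q pol t]
    by (simp add: pmf_expectation_bind[of ?A] pmf_expectation_bind[of UNIV] expectation_finite_UNIV
                  set_bind_pmf split_beta)
  also have "\<dots> = measure_pmf.expectation (joint mu0 p q pol t) ?K"
    using \<open>finite ?A\<close> set_pmf_joint[of mu0 p q pol t]
    by (subst integral_measure_pmf_real[of ?A]) (auto simp: mult.commute)
  finally show ?thesis .
qed

lemma pmf_joint_Suc:
  fixes mu0 :: "'th::finite pmf" and q :: "'th \<Rightarrow> 'l::finite \<Rightarrow> 'o::finite pmf"
  shows "pmf (joint mu0 p q pol (Suc t)) (\<theta>, h @ [(l, r)])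
           = pmf (joint mu0 p q pol t) (\<theta>, h) * pmf (pol h) l * pmf (step p q (nu t h) \<theta> l) r"
proof -
  have integrand:
    "(\<Sum>l'\<in>UNIV. pmf (pol h') l' * (\<Sum>r'\<in>UNIV. pmf (step p q (nu t h') \<theta>' l') r'
        * (if (\<theta>', h' @ [(l', r')]) = (\<theta>, h @ [(l, r)]) then 1 else 0)))
      = (if (\<theta>', h') = (\<theta>, h) then pmf (pol h) l * pmf (step p q (nu t h) \<theta> l) r else 0)" for \<theta>' h'
    by (cases "(\<theta>', h') = (\<theta>, h)")
       (auto simp: if_if_eq_conj[symmetric] if_distrib[of "\<lambda>x. _ * x"] sum.If_cases
                   if_distrib[of "\<lambda>S. S \<inter> _"] if_distrib[of "sum _"])
  have "pmf (joint mu0 p q pol (Suc t)) (\<theta>, h @ [(l, r)])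
          = measure_pmf.expectation (joint mu0 p q pol (Suc t)) (\<lambda>y. if y = (\<theta>, h @ [(l, r)]) then 1 else 0)"
    by (simp add: expectation_point_pmf)
  also have "\<dots> = measure_pmf.expectation (joint mu0 p q pol t)
                    (\<lambda>y. if y = (\<theta>, h) then pmf (pol h) l * pmf (step p q (nu t h) \<theta> l) r else 0)"
    by (simp only: expectation_joint_Suc integrand) (simp add: case_prod_unfold prod_eq_iff)
  finally show ?thesis
    by (simp add: expectation_point_pmf mult_ac)
qed

locale survival_model =
  fixes mu0 :: "'th::finite pmf"
    and p :: "'th \<Rightarrow> 'l::finite \<Rightarrow> real"
    and q :: "'th \<Rightarrow> 'l \<Rightarrow> 'o::finite pmf"
  assumes p_bounds: "0 < p \<theta> l" "p \<theta> l < 1"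
begin

lemma pmf_step_alive:
  "pmf (step p q 1 \<theta> l) Dead = 0"
  "pmf (step p q 1 \<theta> l) Died = p \<theta> l"
  "pmf (step p q 1 \<theta> l) (Obs w) = (1 - p \<theta> l) * pmf (q \<theta> l) w"
proof -
  have "pmf (map_pmf Obs (q \<theta> l)) (Obs w) = pmf (q \<theta> l) w"
    by (rule pmf_map_inj') (auto simp: inj_def)
  moreover have "pmf (map_pmf Obs (q \<theta> l)) Dead = 0" "pmf (map_pmf Obs (q \<theta> l)) Died = 0"
    by (auto simp: pmf_eq_0_set_pmf)
  ultimately show
    "pmf (step p q 1 \<theta> l) Dead = 0"
    "pmf (step p q 1 \<theta> l) Died = p \<theta> l"
    "pmf (step p q 1 \<theta> l) (Obs w) = (1 - p \<theta> l) * pmf (q \<theta> l) w"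
    using p_bounds[of \<theta> l] by (simp_all add: step_def pmf_bind)
qed

lemma sum_step_alive:
  "(\<Sum>r\<in>UNIV. pmf (step p q 1 \<theta> l) r * g r)
     = p \<theta> l * g Died + (1 - p \<theta> l) * (\<Sum>w\<in>UNIV. pmf (q \<theta> l) w * g (Obs w))"
  by (simp add: sum_UNIV_outcome pmf_step_alive sum_distrib_left mult.assoc)

lemma mu_nonneg: "0 \<le> mu mu0 p q t h \<theta>"
proof (induction t arbitrary: \<theta>)
  case (Suc t)
  then show ?case
    using p_bounds by (auto intro!: normalize_nonneg simp: less_imp_le split: outcome.split)
qed simp

definition predictive :: "nat \<Rightarrow> ('l, 'o) hist \<Rightarrow> 'l \<Rightarrow> 'o outcome \<Rightarrow> real" where
  "predictive t h l r = (\<Sum>\<theta>\<in>UNIV. mu mu0 p q t h \<theta> * pmf (step p q (nu t h) \<theta> l) r)"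

lemma mu_Suc_bayes:
  assumes "length h = t"
  shows "predictive t h l r * mu mu0 p q (Suc t) (h @ [(l, r)]) \<theta>
           = mu mu0 p q t h \<theta> * pmf (step p q (nu t h) \<theta> l) r"
proof (cases "nu t h = 1")
  case False
  then have "nu t h = 0"
    using nu_eq_0_or_1 by blast
  then show ?thesis
    using assms sum_mu[of mu0 p q t h]
    by (auto simp: predictive_def step_def nu_append mu_append sum_distrib_right[symmetric])
next
  case True
  let ?m = "mu mu0 p q t h"
  have nonneg: "0 \<le> p \<theta>' l * ?m \<theta>'" "0 \<le> (1 - p \<theta>' l) * pmf (q \<theta>' l) w * ?m \<theta>'" for \<theta>' w
    using p_bounds[of \<theta>' l] mu_nonneg by simp_all
  note scale = sum_mult_normalize[of "\<lambda>\<theta>'. p \<theta>' l * ?m \<theta>'"]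
    sum_mult_normalize[of "\<lambda>\<theta>'. (1 - p \<theta>' l) * pmf (q \<theta>' l) w * ?m \<theta>'" for w]
  show ?thesis
    using assms True scale nonneg
    by (cases r) (simp_all add: predictive_def pmf_step_alive mu_Suc_snoc mult_ac del: mu.simps)
qed

lemma sum_predictive_mult:
  "(\<Sum>r\<in>UNIV. predictive t h l r * g r)
     = (\<Sum>\<theta>\<in>UNIV. mu mu0 p q t h \<theta> * (\<Sum>r\<in>UNIV. pmf (step p q (nu t h) \<theta> l) r * g r))"
  unfolding predictive_def sum_distrib_left sum_distrib_right
  by (subst sum.swap) (simp add: mult.assoc)

lemma expected_mu_increment:
  assumes "length h = t"
  shows "(\<Sum>r\<in>UNIV. predictive t h l r * (mu mu0 p q (Suc t) (h @ [(l, r)]) \<theta> - mu mu0 p q t h \<theta>)) = 0"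
proof -
  let ?m = "mu mu0 p q t h"
  have "(\<Sum>r\<in>UNIV. predictive t h l r * mu mu0 p q (Suc t) (h @ [(l, r)]) \<theta>)
          = ?m \<theta> * (\<Sum>r\<in>UNIV. pmf (step p q (nu t h) \<theta> l) r)"
    by (simp add: mu_Suc_bayes[OF assms] sum_distrib_left del: mu.simps)
  also have "\<dots> = ?m \<theta>"
    by (simp add: sum_pmf_eq_1)
  finally have posterior:
    "(\<Sum>r\<in>UNIV. predictive t h l r * mu mu0 p q (Suc t) (h @ [(l, r)]) \<theta>) = ?m \<theta>" .
  have "(\<Sum>r\<in>UNIV. predictive t h l r * ?m \<theta>) = (\<Sum>\<theta>'\<in>UNIV. ?m \<theta>') * ?m \<theta>"
    unfolding sum_predictive_mult by (simp add: sum_distrib_right[symmetric] sum_pmf_eq_1)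
  also have "\<dots> = ?m \<theta>"
    using sum_mu[of mu0 p q t h] by auto
  finally show ?thesis
    using posterior by (simp add: right_diff_distrib sum_subtractf)
qed

lemma expected_alpha_increment:
  assumes "length h = t"
  shows "(\<Sum>r\<in>UNIV. predictive t h l r * (alpha mu0 p q (Suc t) (h @ [(l, r)]) \<theta> - alpha mu0 p q t h \<theta>))
           = - mu mu0 p q t h \<theta> * nu t h * (p \<theta> l - (\<Sum>\<theta>'\<in>UNIV. p \<theta>' l * mu mu0 p q t h \<theta>'))"
proof -
  let ?m = "mu mu0 p q t h"
  define P where "P = (\<Sum>\<theta>'\<in>UNIV. p \<theta>' l * ?m \<theta>')"
  define a where "a = - ?m \<theta> * (p \<theta> l - P) / (1 - P)"
  have incr: "alpha mu0 p q (Suc t) (h @ [(l, r)]) \<theta> - alpha mu0 p q t h \<theta>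
                = nu t h * (if \<exists>w. r = Obs w then a else 0)" for r
    using assms nu_eq_0_or_1[of t h]
    by (auto simp: alpha_append mu_append nu_append lam_snoc pbar_snoc nu_Suc_snoc a_def P_def
             simp del: nu.simps)
  consider (dead) "nu t h = 0" | (null) "?m = (\<lambda>_. 0)"
    | (alive) "nu t h = 1" "(\<Sum>\<theta>'\<in>UNIV. ?m \<theta>') = 1"
    using nu_eq_0_or_1 sum_mu by blast
  then show ?thesis
  proof cases
    case alive
    have "P < 1"
      unfolding P_def using alive mu_nonneg p_bounds by (intro weighted_sum_in_unit_interval) auto
    have "(\<Sum>r\<in>UNIV. predictive t h l r * (alpha mu0 p q (Suc t) (h @ [(l, r)]) \<theta> - alpha mu0 p q t h \<theta>))
            = (\<Sum>\<theta>'\<in>UNIV. ?m \<theta>' * ((1 - p \<theta>' l) * a))"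
      using alive
      by (simp add: incr sum_predictive_mult sum_step_alive sum_distrib_right[symmetric] sum_pmf_eq_1
          del: alpha.simps)
    also have "\<dots> = a * ((\<Sum>\<theta>'\<in>UNIV. ?m \<theta>') - P)"
      unfolding P_def by (simp add: sum_distrib_left sum_subtractf algebra_simps)
    also have "\<dots> = - ?m \<theta> * nu t h * (p \<theta> l - P)"
      using alive \<open>P < 1\<close> by (simp add: a_def)
    finally show ?thesis
      unfolding P_def .
  qed (simp_all add: incr predictive_def del: alpha.simps)
qed

lemma expected_beta_increment:
  assumes "length h = t"
  shows "(\<Sum>r\<in>UNIV. predictive t h l r * (beta mu0 p q (Suc t) (h @ [(l, r)]) \<theta> - beta mu0 p q t h \<theta>))
           = mu mu0 p q t h \<theta> * nu t h * (p \<theta> l - (\<Sum>\<theta>'\<in>UNIV. p \<theta>' l * mu mu0 p q t h \<theta>'))"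
proof -
  let ?m = "mu mu0 p q t h"
  define P where "P = (\<Sum>\<theta>'\<in>UNIV. p \<theta>' l * ?m \<theta>')"
  define b where "b = ?m \<theta> * (p \<theta> l - P) / P"
  have incr: "beta mu0 p q (Suc t) (h @ [(l, r)]) \<theta> - beta mu0 p q t h \<theta>
                = nu t h * (if \<exists>w. r = Obs w then 0 else b)" for r
    using assms nu_eq_0_or_1[of t h]
    by (auto simp: beta_append mu_append nu_append lam_snoc pbar_snoc nu_Suc_snoc b_def P_def
             simp del: nu.simps)
  consider (dead) "nu t h = 0" | (null) "?m = (\<lambda>_. 0)"
    | (alive) "nu t h = 1" "(\<Sum>\<theta>'\<in>UNIV. ?m \<theta>') = 1"
    using nu_eq_0_or_1 sum_mu by blast
  then show ?thesis
  proof cases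
    case alive
    have "0 < P"
      unfolding P_def using alive mu_nonneg p_bounds by (intro weighted_sum_in_unit_interval) auto
    have "(\<Sum>r\<in>UNIV. predictive t h l r * (beta mu0 p q (Suc t) (h @ [(l, r)]) \<theta> - beta mu0 p q t h \<theta>))
            = (\<Sum>\<theta>'\<in>UNIV. ?m \<theta>' * (p \<theta>' l * b))"
      using alive by (simp add: incr sum_predictive_mult sum_step_alive del: beta.simps)
    also have "\<dots> = P * b"
      unfolding P_def by (simp add: sum_distrib_left sum_distrib_right mult_ac)
    also have "\<dots> = ?m \<theta> * nu t h * (p \<theta> l - P)"
      using alive \<open>0 < P\<close> by (simp add: b_def)
    finally show ?thesis
      unfolding P_def .
  qed (simp_all add: incr predictive_def del: beta.simps)
qed

lemma expected_mutilde_increment: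
  assumes "length h = t"
  shows "(\<Sum>r\<in>UNIV. predictive t h l r * (mutilde mu0 p q (Suc t) (h @ [(l, r)]) \<theta> - mutilde mu0 p q t h \<theta>)) = 0"
proof -
  have "mutilde mu0 p q (Suc t) (h @ [(l, r)]) \<theta> - mutilde mu0 p q t h \<theta>
          = (mu mu0 p q (Suc t) (h @ [(l, r)]) \<theta> - mu mu0 p q t h \<theta>)
            - (alpha mu0 p q (Suc t) (h @ [(l, r)]) \<theta> - alpha mu0 p q t h \<theta>)
            - (beta mu0 p q (Suc t) (h @ [(l, r)]) \<theta> - beta mu0 p q t h \<theta>)" for r
    by (simp add: mutilde_def)
  then show ?thesis
    using expected_mu_increment[OF assms] expected_alpha_increment[OF assms]
      expected_beta_increment[OF assms]
    by (simp add: right_diff_distrib sum_subtractf del: mu.simps alpha.simps beta.simps)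
qed

lemma pmf_joint_posterior:
  "pmf (joint mu0 p q pol t) (\<theta>, h) = (\<Sum>\<theta>'\<in>UNIV. pmf (joint mu0 p q pol t) (\<theta>', h)) * mu mu0 p q t h \<theta>"
proof (induction t arbitrary: \<theta> h)
  case 0
  have "pmf (map_pmf (\<lambda>\<theta>. (\<theta>, [])) mu0) ((\<lambda>\<theta>. (\<theta>, [])) \<theta>') = pmf mu0 \<theta>'" for \<theta>'
    by (rule pmf_map_inj') (simp add: inj_def)
  then have "pmf (joint mu0 p q pol 0) (\<theta>', h) = (if h = [] then pmf mu0 \<theta>' else 0)" for \<theta>'
    by (auto simp: pmf_eq_0_set_pmf)
  then show ?case
    by (simp add: sum_pmf_eq_1)
next
  case (Suc t)
  show ?case
  proof (cases h rule: rev_exhaust)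
    case Nil
    then show ?thesis
      by (simp add: pmf_joint_eq_0 del: joint.simps)
  next
    case (snoc h0 x)
    obtain l r where h: "h = h0 @ [(l, r)]"
      using snoc by (cases x) auto
    show ?thesis
    proof (cases "length h0 = t")
      case False
      then show ?thesis
        by (simp add: h pmf_joint_Suc pmf_joint_eq_0 del: joint.simps)
    next
      case True
      define c where
        "c = (\<Sum>\<theta>'\<in>UNIV. pmf (joint mu0 p q pol t) (\<theta>', h0)) * pmf (pol h0) l * predictive t h0 l r"
      have scaled: "pmf (joint mu0 p q pol (Suc t)) (\<theta>', h) = c * mu mu0 p q (Suc t) h \<theta>'" for \<theta>'
        unfolding h pmf_joint_Suc Suc.IH[of \<theta>' h0] c_def
        using mu_Suc_bayes[OF True, of l r \<theta>'] by (simp add: mult_ac del: mu.simps)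
      show ?thesis
        using sum_mu[of mu0 p q "Suc t" h]
        by (auto simp: scaled sum_distrib_left[symmetric] simp del: mu.simps joint.simps)
    qed
  qed
qed

lemma expectation_joint_posterior:
  "measure_pmf.expectation (joint mu0 p q pol t) G
     = (\<Sum>h\<in>{h. length h = t}. (\<Sum>\<theta>'\<in>UNIV. pmf (joint mu0 p q pol t) (\<theta>', h))
                                  * (\<Sum>\<theta>\<in>UNIV. mu mu0 p q t h \<theta> * G (\<theta>, h)))"
proof -
  let ?H = "{h :: ('l, 'o) hist. length h = t}"
  have "finite ((UNIV :: 'th set) \<times> ?H)"
    by (simp add: finite_histories)
  have "measure_pmf.expectation (joint mu0 p q pol t) G
          = (\<Sum>(\<theta>, h)\<in>UNIV \<times> ?H. G (\<theta>, h) * pmf (joint mu0 p q pol t) (\<theta>, h))"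
    using set_pmf_joint[of mu0 p q pol t] \<open>finite (_ \<times> ?H)\<close>
    by (subst integral_measure_pmf_real[of "UNIV \<times> ?H"]) (auto simp: case_prod_unfold)
  also have "\<dots> = (\<Sum>\<theta>\<in>UNIV. \<Sum>h\<in>?H. G (\<theta>, h) * pmf (joint mu0 p q pol t) (\<theta>, h))"
    by (rule sum.cartesian_product[symmetric])
  also have "\<dots> = (\<Sum>h\<in>?H. \<Sum>\<theta>\<in>UNIV. G (\<theta>, h) * pmf (joint mu0 p q pol t) (\<theta>, h))"
    by (rule sum.swap)
  also have "\<dots> = (\<Sum>h\<in>?H. (\<Sum>\<theta>'\<in>UNIV. pmf (joint mu0 p q pol t) (\<theta>', h))
                                  * (\<Sum>\<theta>\<in>UNIV. mu mu0 p q t h \<theta> * G (\<theta>, h)))"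
    by (subst pmf_joint_posterior) (simp add: sum_distrib_left mult_ac)
  finally show ?thesis .
qed

lemma expectation_mutilde_increment_zero:
  "measure_pmf.expectation (joint mu0 p q pol (Suc t))
     (\<lambda>(\<theta>', h). if E (take t h) (lam t h)
                then mutilde mu0 p q (Suc t) h \<theta> - mutilde mu0 p q t h \<theta> else 0) = 0"
    (is "measure_pmf.expectation _ ?F = 0")
proof -
  let ?incr = "\<lambda>h l r. mutilde mu0 p q (Suc t) (h @ [(l, r)]) \<theta> - mutilde mu0 p q t h \<theta>"
  have conditional_mean_zero:
    "(\<Sum>\<theta>'\<in>UNIV. mu mu0 p q t h \<theta>' * (\<Sum>l\<in>UNIV. pmf (pol h) l *
        (\<Sum>r\<in>UNIV. pmf (step p q (nu t h) \<theta>' l) r * ?F (\<theta>', h @ [(l, r)])))) = 0"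
    if "length h = t" for h
  proof -
    have inner: "(\<Sum>r\<in>UNIV. pmf (step p q (nu t h) \<theta>' l) r * ?F (\<theta>', h @ [(l, r)]))
        = of_bool (E h l) * (\<Sum>r\<in>UNIV. pmf (step p q (nu t h) \<theta>' l) r * ?incr h l r)" for \<theta>' l
      using that by (cases "E h l") (simp_all add: lam_snoc mutilde_append)
    have "(\<Sum>\<theta>'\<in>UNIV. mu mu0 p q t h \<theta>' * (\<Sum>l\<in>UNIV. pmf (pol h) l *
        (\<Sum>r\<in>UNIV. pmf (step p q (nu t h) \<theta>' l) r * ?F (\<theta>', h @ [(l, r)]))))
      = (\<Sum>l\<in>UNIV. pmf (pol h) l * of_bool (E h l) * (\<Sum>r\<in>UNIV. predictive t h l r * ?incr h l r))"
      unfolding inner sum_predictive_mult sum_distrib_left by (subst sum.swap) (simp add: mult_ac)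
    also have "\<dots> = 0"
      using expected_mutilde_increment[OF that] by simp
    finally show ?thesis .
  qed
  have "measure_pmf.expectation (joint mu0 p q pol (Suc t)) ?F
      = (\<Sum>h\<in>{h. length h = t}. (\<Sum>\<theta>'\<in>UNIV. pmf (joint mu0 p q pol t) (\<theta>', h))
          * (\<Sum>\<theta>'\<in>UNIV. mu mu0 p q t h \<theta>' * (\<Sum>l\<in>UNIV. pmf (pol h) l *
              (\<Sum>r\<in>UNIV. pmf (step p q (nu t h) \<theta>' l) r * ?F (\<theta>', h @ [(l, r)])))))"
    by (simp only: expectation_joint_Suc expectation_joint_posterior prod.case)
  also have "\<dots> = 0"
    by (intro sum.neutral ballI) (simp only: mem_Collect_eq conditional_mean_zero mult_zero_right)
  finally show ?thesis .
qed

end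

theorem proposition2:
  fixes mu0 :: "'th::finite pmf"
    and p :: "'th \<Rightarrow> 'l::finite \<Rightarrow> real"
    and q :: "'th \<Rightarrow> 'l \<Rightarrow> 'o::finite pmf"
    and pol :: "('l, 'o) hist \<Rightarrow> 'l pmf"
    and t :: nat and l :: 'l and m :: "'th \<Rightarrow> real" and v :: real and \<theta> :: 'th
  assumes "\<forall>\<theta>' l'. 0 < p \<theta>' l' \<and> p \<theta>' l' < 1"
  shows "measure_pmf.expectation (joint mu0 p q pol (Suc t))
           (\<lambda>(\<theta>', h). if lam t h = l \<and> mu mu0 p q t h = m \<and> nu t h = v
                      then mutilde mu0 p q (Suc t) h \<theta> - mutilde mu0 p q t h \<theta> else 0) = 0"
proof -
  interpret survival_model mu0 p q
    using assms by unfold_locales auto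
  let ?E = "\<lambda>h l'. l' = l \<and> mu mu0 p q t h = m \<and> nu t h = v"
  have "measure_pmf.expectation (joint mu0 p q pol (Suc t))
           (\<lambda>(\<theta>', h). if lam t h = l \<and> mu mu0 p q t h = m \<and> nu t h = v
                      then mutilde mu0 p q (Suc t) h \<theta> - mutilde mu0 p q t h \<theta> else 0)
      = measure_pmf.expectation (joint mu0 p q pol (Suc t))
           (\<lambda>(\<theta>', h). if ?E (take t h) (lam t h)
                      then mutilde mu0 p q (Suc t) h \<theta> - mutilde mu0 p q t h \<theta> else 0)"
    using set_pmf_joint[of mu0 p q pol "Suc t"]
    by (intro integral_cong_AE) (auto simp: AE_measure_pmf_iff mu_take nu_take simp del: joint.simps)
  also have "\<dots> = 0"
    by (rule expectation_mutilde_increment_zero)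
  finally show ?thesis .
qed

end
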